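(* Let $Z_1,\dots,Z_k$ be independent continuous random variables, each symmetric about $0$ (with mean $0$), and let $Y=\max(Z_1,\dots,Z_k)$ with probability density function $f_Y$. Then for every $x\ge 0$, $f_Y(x)\ge f_Y(-x)$. *)

theory Defs
  imports "HOL-Probability.Probability"
begin

definition symmetric_rv :: "'a measure \<Rightarrow> ('a \<Rightarrow> real) \<Rightarrow> bool" where
  "symmetric_rv M X \<longleftrightarrow> distr M borel X = distr M borel (\<lambda>\<omega>. - X \<omega>)"

end

theory Submission
  imports Defs
begin

text \<open>For independent $X$, $Y$ with densities $p$, $q$, the maximum has density
$p(x) Q(x) + q(x) P(x)$, where $P$, $Q$ are the distribution functions. If $p$ and $q$ dominate
their reflections on $[0, \infty)$, so does this density, because $P$ and $Q$ are monotone. The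
property thus passes from the summands to the maximum of $k$ variables by induction, and a
symmetric variable has an even density, which trivially has it.\<close>

definition max_density :: "(real \<Rightarrow> ennreal) \<Rightarrow> (real \<Rightarrow> ennreal) \<Rightarrow> real \<Rightarrow> ennreal" where
  "max_density p q x = p x * (\<integral>\<^sup>+z\<in>{..x}. q z \<partial>lborel) + q x * (\<integral>\<^sup>+z\<in>{..<x}. p z \<partial>lborel)"

definition right_dominant :: "(real \<Rightarrow> ennreal) \<Rightarrow> bool" where
  "right_dominant h \<longleftrightarrow> (AE x in lborel. 0 \<le> x \<longrightarrow> h (- x) \<le> h x)"

lemma AE_lborel_uminus:
  assumes "AE x in lborel. P x"
  shows "AE x in lborel. P (- x :: real)"
proof -
  have "AE x in distr lborel borel uminus. P x"
    unfolding lborel_distr_uminus by (rule assms)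
  then show ?thesis
    by (rule AE_distrD[rotated]) simp
qed

lemma right_dominant_AE_cong:
  assumes "AE x in lborel. g x = h x" and "right_dominant h"
  shows "right_dominant g"
proof -
  have "AE x in lborel. g (- x) = h (- x)"
    using AE_lborel_uminus[OF assms(1)] .
  with assms show ?thesis
    unfolding right_dominant_def by eventually_elim auto
qed

lemma right_dominant_if_even:
  assumes "AE x in lborel. f (- x) = f x"
  shows "right_dominant f"
  using assms unfolding right_dominant_def by eventually_elim auto

lemma (in prob_space) symmetric_rv_density_even:
  assumes X: "distributed M lborel X f" and "symmetric_rv M X"
  shows "AE x in lborel. f (- x) = f x"
proof -
  have "distributed M lborel (\<lambda>\<omega>. - X \<omega>) (\<lambda>x. f (- x))"
    using distributed_affine[OF X, of "-1" 0] by (simp add: divide_ennreal_def)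
  moreover have "distr M lborel (\<lambda>\<omega>. - X \<omega>) = distr M lborel X"
    using \<open>symmetric_rv M X\<close> unfolding symmetric_rv_def by (metis distr_cong sets_lborel)
  ultimately have "distributed M lborel X (\<lambda>x. f (- x))"
    by (simp add: distributed_def)
  from distributed_unique[OF this X] show ?thesis .
qed

lemma pred_mem_atMost_lessThan [measurable (raw)]:
  fixes f g :: "'a \<Rightarrow> real"
  assumes "f \<in> borel_measurable M" and "g \<in> borel_measurable M"
  shows "Measurable.pred M (\<lambda>x. f x \<in> {..g x})" and "Measurable.pred M (\<lambda>x. f x \<in> {..<g x})"
  using assms unfolding atMost_iff lessThan_iff by (measurable, measurable)

lemma borel_measurable_max_density [measurable]:
  assumes [measurable]: "p \<in> borel_measurable borel" "q \<in> borel_measurable borel"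
  shows "max_density p q \<in> borel_measurable borel"
  unfolding max_density_def by measurable

lemma right_dominant_max_density:
  assumes "right_dominant p" and "right_dominant q"
  shows "right_dominant (max_density p q)"
  using assms unfolding right_dominant_def
proof eventually_elim
  case (elim x)
  show ?case
  proof
    assume "0 \<le> x"
    then have "(\<integral>\<^sup>+z\<in>{..-x}. q z \<partial>lborel) \<le> (\<integral>\<^sup>+z\<in>{..x}. q z \<partial>lborel)"
      and "(\<integral>\<^sup>+z\<in>{..<-x}. p z \<partial>lborel) \<le> (\<integral>\<^sup>+z\<in>{..<x}. p z \<partial>lborel)"
      by (auto intro!: nn_set_integral_set_mono)
    with elim \<open>0 \<le> x\<close> show "max_density p q (- x) \<le> max_density p q x"
      unfolding max_density_def by (intro add_mono mult_mono) auto
  qed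
qed

lemma nn_integral_max_pair:
  fixes p q :: "real \<Rightarrow> ennreal"
  assumes [measurable]: "p \<in> borel_measurable borel" "q \<in> borel_measurable borel" "B \<in> sets borel"
  shows "(\<integral>\<^sup>+(x, z). p x * q z * indicator B (max x z) \<partial>(lborel \<Otimes>\<^sub>M lborel))
    = (\<integral>\<^sup>+x\<in>B. max_density p q x \<partial>lborel)"
proof -
  have "(\<integral>\<^sup>+(x, z). p x * q z * indicator B x * indicator {..x} z \<partial>(lborel \<Otimes>\<^sub>M lborel))
      = (\<integral>\<^sup>+x. \<integral>\<^sup>+z. (p x * indicator B x) * (q z * indicator {..x} z) \<partial>lborel \<partial>lborel)"
    by (subst lborel.nn_integral_fst[symmetric]) (measurable, simp add: mult_ac)
  also have "\<dots> = (\<integral>\<^sup>+x\<in>B. p x * (\<integral>\<^sup>+z\<in>{..x}. q z \<partial>lborel) \<partial>lborel)"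
    by (intro nn_integral_cong, subst nn_integral_cmult) (measurable, simp add: ac_simps)
  finally have below:
    "\<dots> = (\<integral>\<^sup>+(x, z). p x * q z * indicator B x * indicator {..x} z \<partial>(lborel \<Otimes>\<^sub>M lborel))" ..
  have "(\<integral>\<^sup>+(x, z). p x * q z * indicator B z * indicator {..<z} x \<partial>(lborel \<Otimes>\<^sub>M lborel))
      = (\<integral>\<^sup>+z. \<integral>\<^sup>+x. (q z * indicator B z) * (p x * indicator {..<z} x) \<partial>lborel \<partial>lborel)"
    by (subst lborel_pair.nn_integral_snd[symmetric], measurable)
      (intro nn_integral_cong, simp add: mult.commute mult.left_commute)
  also have "\<dots> = (\<integral>\<^sup>+z\<in>B. q z * (\<integral>\<^sup>+x\<in>{..<z}. p x \<partial>lborel) \<partial>lborel)"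
    by (intro nn_integral_cong, subst nn_integral_cmult) (measurable, simp add: ac_simps)
  finally have above:
    "\<dots> = (\<integral>\<^sup>+(x, z). p x * q z * indicator B z * indicator {..<z} x \<partial>(lborel \<Otimes>\<^sub>M lborel))" ..
  have "(\<integral>\<^sup>+x\<in>B. max_density p q x \<partial>lborel)
      = (\<integral>\<^sup>+x\<in>B. p x * (\<integral>\<^sup>+z\<in>{..x}. q z \<partial>lborel) \<partial>lborel)
      + (\<integral>\<^sup>+z\<in>B. q z * (\<integral>\<^sup>+x\<in>{..<z}. p x \<partial>lborel) \<partial>lborel)"
    unfolding max_density_def distrib_right by (rule nn_integral_add) measurable
  also have "\<dots> = (\<integral>\<^sup>+(x, z). p x * q z * indicator B x * indicator {..x} z
      + p x * q z * indicator B z * indicator {..<z} x \<partial>(lborel \<Otimes>\<^sub>M lborel))"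
  proof -
    have "(\<lambda>(x, z). p x * q z * indicator B x * indicator {..x} z) \<in> borel_measurable (lborel \<Otimes>\<^sub>M lborel)"
      and "(\<lambda>(x, z). p x * q z * indicator B z * indicator {..<z} x) \<in> borel_measurable (lborel \<Otimes>\<^sub>M lborel)"
      by (measurable, measurable)
    from nn_integral_add[OF this, symmetric] show ?thesis
      unfolding below above case_prod_beta' .
  qed
  also have "\<dots> = (\<integral>\<^sup>+(x, z). p x * q z * indicator B (max x z) \<partial>(lborel \<Otimes>\<^sub>M lborel))"
    by (intro nn_integral_cong) (auto split: split_indicator)
  finally show ?thesis ..
qed

lemma (in prob_space) distributed_max:
  fixes X Y :: "'a \<Rightarrow> real"
  assumes indep: "indep_var borel X borel Y"
    and X: "distributed M lborel X p" and Y: "distributed M lborel Y q"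
  shows "distributed M lborel (\<lambda>\<omega>. max (X \<omega>) (Y \<omega>)) (max_density p q)"
proof -
  have "indep_var lborel X lborel Y"
    using indep unfolding indep_var_def indep_vars_def by (simp add: case_bool_if)
  then have XY: "distributed M (lborel \<Otimes>\<^sub>M lborel) (\<lambda>\<omega>. (X \<omega>, Y \<omega>)) (\<lambda>(x, y). p x * q y)"
    using distributed_joint_indep[OF sigma_finite_lborel sigma_finite_lborel X Y] by blast
  have [measurable]: "X \<in> borel_measurable M" "Y \<in> borel_measurable M"
    "p \<in> borel_measurable borel" "q \<in> borel_measurable borel"
    using X Y by (auto dest: distributed_measurable distributed_borel_measurable)
  have "distr M lborel (\<lambda>\<omega>. max (X \<omega>) (Y \<omega>)) = density lborel (max_density p q)"
  proof (rule measure_eqI)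
    fix B assume "B \<in> sets (distr M lborel (\<lambda>\<omega>. max (X \<omega>) (Y \<omega>)))"
    then have [measurable]: "B \<in> sets borel" by simp
    have "emeasure (distr M lborel (\<lambda>\<omega>. max (X \<omega>) (Y \<omega>))) B
        = emeasure M ((\<lambda>\<omega>. (X \<omega>, Y \<omega>)) -` {(x, y). max x y \<in> B} \<inter> space M)"
      by (subst emeasure_distr) (auto intro!: arg_cong[where f="emeasure M"])
    also have "\<dots> = (\<integral>\<^sup>+xy. (\<lambda>(x, y). p x * q y) xy * indicator {(x, y). max x y \<in> B} xy \<partial>(lborel \<Otimes>\<^sub>M lborel))"
    proof (rule distributed_emeasure[OF XY])
      have "Measurable.pred (borel \<Otimes>\<^sub>M borel) (\<lambda>(x, y). max x y \<in> B)"
        unfolding case_prod_beta' by measurable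
      then show "{(x, y). max x y \<in> B} \<in> sets (lborel \<Otimes>\<^sub>M lborel)"
        by (simp add: pred_def space_pair_measure)
    qed
    also have "\<dots> = (\<integral>\<^sup>+(x, y). p x * q y * indicator B (max x y) \<partial>(lborel \<Otimes>\<^sub>M lborel))"
      by (intro nn_integral_cong) (auto split: split_indicator)
    also have "\<dots> = emeasure (density lborel (max_density p q)) B"
      using nn_integral_max_pair[of p q B] emeasure_density[of "max_density p q" lborel B] by simp
    finally show "emeasure (distr M lborel (\<lambda>\<omega>. max (X \<omega>) (Y \<omega>))) B
      = emeasure (density lborel (max_density p q)) B" .
  qed simp
  then show ?thesis
    by (simp add: distributed_def)
qed

lemma (in prob_space) indep_vars_Max:
  fixes X :: "'i \<Rightarrow> 'a \<Rightarrow> real"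
  assumes I: "finite I" "i \<notin> I" and indep: "indep_vars (\<lambda>_. borel) X (insert i I)"
  shows "indep_var borel (X i) borel (\<lambda>\<omega>. Max ((\<lambda>i. X i \<omega>) ` I))"
proof -
  have "indep_var
    borel ((\<lambda>f. f i) \<circ> (\<lambda>\<omega>. restrict (\<lambda>i. X i \<omega>) {i}))
    borel ((\<lambda>f. Max (f ` I)) \<circ> (\<lambda>\<omega>. restrict (\<lambda>i. X i \<omega>) I))"
    using I by (intro indep_var_compose[OF indep_var_restrict[OF indep]] borel_measurable_Max) auto
  also have "(\<lambda>f. f i) \<circ> (\<lambda>\<omega>. restrict (\<lambda>i. X i \<omega>) {i}) = X i"
    by auto
  also have "(\<lambda>f. Max (f ` I)) \<circ> (\<lambda>\<omega>. restrict (\<lambda>i. X i \<omega>) I) = (\<lambda>\<omega>. Max ((\<lambda>i. X i \<omega>) ` I))"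
    by (auto cong: rev_conj_cong)
  finally show ?thesis .
qed

lemma (in prob_space) Max_distributed_right_dominant:
  fixes X :: "'i \<Rightarrow> 'a \<Rightarrow> real"
  assumes "finite I" "I \<noteq> {}" "indep_vars (\<lambda>_. borel) X I"
    and "\<And>i. i \<in> I \<Longrightarrow> distributed M lborel (X i) (f i)"
    and "\<And>i. i \<in> I \<Longrightarrow> right_dominant (f i)"
  shows "\<exists>h. distributed M lborel (\<lambda>\<omega>. Max ((\<lambda>i. X i \<omega>) ` I)) h \<and> right_dominant h"
  using assms
proof (induction I rule: finite_ne_induct)
  case (singleton i)
  then show ?case by auto
next
  case (insert i I)
  have "indep_vars (\<lambda>_. borel) X I"
    using indep_vars_subset[OF insert.prems(1)] by blast
  with insert obtain h where h: "distributed M lborel (\<lambda>\<omega>. Max ((\<lambda>i. X i \<omega>) ` I)) h" "right_dominant h"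
    by auto
  have "indep_var borel (X i) borel (\<lambda>\<omega>. Max ((\<lambda>i. X i \<omega>) ` I))"
    using insert by (intro indep_vars_Max) auto
  from distributed_max[OF this _ h(1)] insert.prems(2)
  have "distributed M lborel (\<lambda>\<omega>. max (X i \<omega>) (Max ((\<lambda>i. X i \<omega>) ` I))) (max_density (f i) h)"
    by simp
  moreover have "right_dominant (max_density (f i) h)"
    using insert.prems(3) h(2) by (simp add: right_dominant_max_density)
  ultimately show ?case
    using insert.hyps by auto
qed

theorem lemma25:
  fixes M :: "'a measure" and Z :: "nat \<Rightarrow> 'a \<Rightarrow> real" and k :: nat
    and f :: "nat \<Rightarrow> real \<Rightarrow> ennreal" and g :: "real \<Rightarrow> ennreal"
  assumes "prob_space M"
    and "k \<ge> 1"
    and "prob_space.indep_vars M (\<lambda>_. borel) Z {1..k}"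
    and "\<And>i. i \<in> {1..k} \<Longrightarrow> distributed M lborel (Z i) (f i)"
    and "\<And>i. i \<in> {1..k} \<Longrightarrow> symmetric_rv M (Z i)"
    and "distributed M lborel (\<lambda>\<omega>. Max ((\<lambda>i. Z i \<omega>) ` {1..k})) g"
  shows "AE x in lborel. 0 \<le> x \<longrightarrow> g (- x) \<le> g x"
proof -
  interpret prob_space M by fact
  have "right_dominant (f i)" if "i \<in> {1..k}" for i
    using that assms(4,5) by (intro right_dominant_if_even symmetric_rv_density_even)
  with assms(2-4) obtain h where
    h: "distributed M lborel (\<lambda>\<omega>. Max ((\<lambda>i. Z i \<omega>) ` {1..k})) h" "right_dominant h"
    using Max_distributed_right_dominant[of "{1..k}" Z f] by auto
  have "AE x in lborel. g x = h x"
    using distributed_unique[OF assms(6) h(1)] .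
  from right_dominant_AE_cong[OF this h(2)] show ?thesis
    unfolding right_dominant_def .
qed

end
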